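(* Let $n,m\ge1$ and let $A,B,C$ be commutative associative unital $\mathbb{K}$-algebras. If $\gamma\colon A\to B$ is a Frobenius $m$-homomorphism and $\varphi\colon B\to C$ is a Frobenius $n$-homomorphism, then $\varphi\circ\gamma\colon A\to C$ is a Frobenius $nm$-homomorphism. Moreover $R_{\varphi\circ\gamma}(a,z)=\mathrm{ber}_\varphi\bigl(R_\gamma(a,z)\bigr)$, where $\mathrm{ber}_\varphi$ is applied to the polynomial $R_\gamma(a,z)\in B[z]$ with $z$ treated as a scalar variable (i.e. $\mathrm{ber}_\varphi$ extended $\mathbb{K}[z]$-polynomially).
   Context: $\mathbb{K}=\mathbb{R}$ or $\mathbb{C}$. For commutative associative unital $\mathbb{K}$-algebras $A,B$, a $\mathbb{K}$-linear map $\varphi\colon A\to B$ and $a\in A$, the characteristic function is $R_\varphi(a,z)=\exp\bigl(\varphi(\ln(1+az))\bigr)=1+\sum_{k\ge1}\psi_k(a)z^k\in B[[z]]$, with $\ln(1+az)=\sum_{k\ge1}(-1)^{k+1}a^kz^k/k$ and $\varphi$ applied coefficientwise. The Frobenius maps $\Phi_k\colon A^k\to B$ of $\varphi$ are defined by $\Phi_1=\varphi$ and $\Phi_{k+1}(a_1,\dots,a_{k+1})=\varphi(a_1)\Phi_k(a_2,\dots,a_{k+1})-\sum_{j=2}^{k+1}\Phi_k(a_2,\dots,a_{j-1},a_1a_j,a_{j+1},\dots,a_{k+1})$. A linear map $\varphi$ is a (Frobenius) $n$-homomorphism if $\varphi(1)=n\cdot1$ and $\Phi_k\equiv0$ for all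 $k\ge n+1$. For an $n$-homomorphism $\varphi$, the $\varphi$-Berezinian is $\mathrm{ber}_\varphi(b)=1+\sum_{k=1}^n\psi_k(b-1)$, a polynomial function of degree $n$ in $b$. *)

theory Defs
  imports Complex_Main "HOL-Computational_Algebra.Formal_Power_Series"
begin

text \<open>Throughout, the ground field is taken to be the reals; K-algebras are types of class
  real_algebra_1 (commutative: comm_ring_1), K-linear maps are those satisfying linear.
  Generic versions of the formal series operations are parametrised by a scalar action
  sc of the rationals/reals (needed to apply the construction over B[z]).\<close>

text \<open>Exponential of a formal power series (meant for zero constant term):
  exp f = sum over j of f^j / j!, computed coefficientwise (finite sums).\<close>
definition fexp :: "(real \<Rightarrow> 'x::comm_ring_1 \<Rightarrow> 'x) \<Rightarrow> 'x fps \<Rightarrow> 'x fps" where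
  "fexp sc f = Abs_fps (\<lambda>k. \<Sum>j\<le>k. sc (1 / fact j) (fps_nth (f ^ j) k))"

definition fln1p :: "(real \<Rightarrow> 'x::comm_ring_1 \<Rightarrow> 'x) \<Rightarrow> 'x \<Rightarrow> 'x fps" where
  "fln1p sc a = Abs_fps (\<lambda>k. if k = 0 then 0 else sc ((-1) ^ (k + 1) / real k) (a ^ k))"

definition char_fun_gen ::
  "(real \<Rightarrow> 'x::comm_ring_1 \<Rightarrow> 'x) \<Rightarrow> (real \<Rightarrow> 'y::comm_ring_1 \<Rightarrow> 'y) \<Rightarrow> ('x \<Rightarrow> 'y) \<Rightarrow> 'x \<Rightarrow> 'y fps" where
  "char_fun_gen sa sb \<phi> a = fexp sb (Abs_fps (\<lambda>k. \<phi> (fps_nth (fln1p sa a) k)))"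

definition char_fun ::
  "('a::{real_algebra_1,comm_ring_1} \<Rightarrow> 'b::{real_algebra_1,comm_ring_1}) \<Rightarrow> 'a \<Rightarrow> 'b fps" where
  "char_fun \<phi> a = char_fun_gen scaleR scaleR \<phi> a"

definition psi :: "('a::{real_algebra_1,comm_ring_1} \<Rightarrow> 'b::{real_algebra_1,comm_ring_1}) \<Rightarrow> nat \<Rightarrow> 'a \<Rightarrow> 'b" where
  "psi \<phi> k a = fps_nth (char_fun \<phi> a) k"

function frob :: "('a::comm_ring_1 \<Rightarrow> 'b::comm_ring_1) \<Rightarrow> 'a list \<Rightarrow> 'b" where
  "frob \<phi> [] = 0"
| "frob \<phi> [a] = \<phi> a"
| "frob \<phi> (a1 # b # rest) =
     \<phi> a1 * frob \<phi> (b # rest)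
     - (\<Sum>j<length (b # rest). frob \<phi> ((b # rest)[j := a1 * (b # rest) ! j]))"
  by pat_completeness auto
termination
  by (relation "measure (\<lambda>(\<phi>, xs). length xs)") (auto split: nat.split)

definition frob_hom :: "nat \<Rightarrow> ('a::{real_algebra_1,comm_ring_1} \<Rightarrow> 'b::{real_algebra_1,comm_ring_1}) \<Rightarrow> bool" where
  "frob_hom n \<phi> \<longleftrightarrow> linear \<phi> \<and> \<phi> 1 = of_nat n \<and>
     (\<forall>xs. length xs \<ge> n + 1 \<longrightarrow> frob \<phi> xs = 0)"

definition ber :: "nat \<Rightarrow> ('a::{real_algebra_1,comm_ring_1} \<Rightarrow> 'b::{real_algebra_1,comm_ring_1}) \<Rightarrow> 'a \<Rightarrow> 'b" where
  "ber n \<phi> b = 1 + (\<Sum>k=1..n. psi \<phi> k (b - 1))"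

definition fps_scale :: "real \<Rightarrow> 'x::real_vector fps \<Rightarrow> 'x fps" where
  "fps_scale r p = Abs_fps (\<lambda>i. r *\<^sub>R (fps_nth p i))"

definition fps_map_coeff :: "('x \<Rightarrow> 'y) \<Rightarrow> 'x fps \<Rightarrow> 'y fps" where
  "fps_map_coeff \<phi> p = Abs_fps (\<lambda>i. \<phi> (fps_nth p i))"

text \<open>ber_phi extended K[z]-polynomially to B[z] (here B[[z]]): the same construction carried
  out for the coefficientwise extension of phi from B[[z]] to C[[z]].\<close>
definition ber_ext :: "nat \<Rightarrow> ('a::{real_algebra_1,comm_ring_1} \<Rightarrow> 'b::{real_algebra_1,comm_ring_1}) \<Rightarrow> 'a fps \<Rightarrow> 'b fps" where
  "ber_ext n \<phi> p = 1 + (\<Sum>k=1..n. fps_nth (char_fun_gen fps_scale fps_scale (fps_map_coeff \<phi>) (p - 1)) k)"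

end

theory Submission
  imports Defs
begin

(*
  Write frob_diag phi k x = Phi_k(x,...,x) for the diagonal values of the Frobenius maps.
  - Frobenius maps are symmetric, additive in each argument, natural for ring maps and obey
    a Leibniz rule for derivations; vanishing in one arity propagates to higher arities, and
    over the reals a Frobenius map vanishing on the diagonal vanishes (polarisation).
  - R_phi(x,z) = sum_k frob_diag phi k x z^k/k!: both sides solve the linear ODE F' = L' F,
    F(0) = 1 for L = phi(ln(1+xz)), by a Newton-type recursion for the diagonal values.
  - Let M be the coefficientwise extension of phi to power series and u = R_gamma(a,z) - 1.
    Vanishing of Phi_{n+1} passes from phi to M, and then the truncated exponential
    ber_ext n phi R_gamma = sum_{k<=n} frob_diag M k u/k! solves the ODE of R_{phi o gamma}.
    This is the Berezinian formula.
  - Since u has degree at most m, frob_diag M k u has degree at most km; so the formula kills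
    the coefficient of z^(nm+1) of R_{phi o gamma}(a,z), which is Phi_{nm+1}(a,...,a)/(nm+1)!,
    and polarisation shows that phi o gamma is an nm-homomorphism.
*)

unbundle fps_syntax

section \<open>Frobenius maps\<close>

lemma frob_cons:
  "ys \<noteq> [] \<Longrightarrow> frob \<phi> (x # ys) = \<phi> x * frob \<phi> ys - (\<Sum>j<length ys. frob \<phi> (ys[j := x * ys!j]))"
  by (cases ys) auto

lemma frob_update_add:
  assumes add: "\<And>x y. \<phi> (x + y) = \<phi> x + \<phi> y"
  shows "i < length xs \<Longrightarrow> frob \<phi> (xs[i := x + y]) = frob \<phi> (xs[i := x]) + frob \<phi> (xs[i := y])"
proof (induction "length xs" arbitrary: xs i x y)
  case 0 then show ?case by simp
next
  case (Suc n)
  then obtain x0 ys where xs: "xs = x0 # ys" and len: "length ys = n" by (cases xs) auto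
  show ?case
  proof (cases i)
    case 0
    show ?thesis
    proof (cases "ys = []")
      case True then show ?thesis using xs 0 by (simp add: add)
    next
      case False
      have "frob \<phi> (ys[j := (x + y) * ys ! j]) = frob \<phi> (ys[j := x * ys ! j]) + frob \<phi> (ys[j := y * ys ! j])"
        if "j < length ys" for j
        using Suc.hyps(1)[of "ys" j "x * ys!j" "y * ys!j"] that len by (simp add: distrib_right)
      then show ?thesis using xs 0 False
        by (simp add: frob_cons add sum.distrib algebra_simps)
    qed
  next
    case (Suc i')
    with Suc.prems xs have i': "i' < length ys" by simp
    then have ne: "ys \<noteq> []" by auto
    have step: "frob \<phi> ((ys[i' := x + y])[j := x0 * (ys[i' := x + y] ! j)]) =
          frob \<phi> ((ys[i' := x])[j := x0 * (ys[i' := x] ! j)]) + frob \<phi> ((ys[i' := y])[j := x0 * (ys[i' := y] ! j)])"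
      if j: "j < length ys" for j
    proof (cases "j = i'")
      case True
      then show ?thesis using Suc.hyps(1)[of ys i' "x0 * x" "x0 * y"] len i' by (simp add: distrib_left)
    next
      case False
      then show ?thesis using Suc.hyps(1)[of "ys[j := x0 * ys!j]" i' x y] len i' j
        by (simp add: list_update_swap)
    qed
    show ?thesis using xs Suc ne i' Suc.hyps(1)[of ys i' x y] len
      by (simp add: frob_cons step sum.distrib algebra_simps)
  qed
qed

text \<open>Used for real scalars and for multiplication by z.\<close>
lemma frob_update_operator:
  assumes T: "\<And>a b. T (a * b) = a * T b"
    and T'm: "\<And>a b. T' (a * b) = a * T' b"
    and T'a: "\<And>a b. T' (a + b) = T' a + T' b"
    and \<phi>T: "\<And>x. \<phi> (T x) = T' (\<phi> x)"
  shows "i < length xs \<Longrightarrow> frob \<phi> (xs[i := T (xs ! i)]) = T' (frob \<phi> xs)"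
proof (induction "length xs" arbitrary: xs i)
  case 0 then show ?case by simp
next
  case (Suc n)
  have T'd: "T' (a - b) = T' a - T' b" for a b
    using T'a[of "a - b" b] by (simp add: algebra_simps)
  have T's: "T' (\<Sum>j<k. f j) = (\<Sum>j<k. T' (f j))" for f and k::nat
    by (induction k) (auto simp: T'a, metis T'd add_diff_cancel diff_self)
  have Tc: "T a * b = a * T b" for a b by (metis T mult.commute)
  obtain x0 ys where xs: "xs = x0 # ys" and len: "length ys = n" using Suc by (cases xs) auto
  show ?case
  proof (cases i)
    case 0
    show ?thesis
    proof (cases "ys = []")
      case True then show ?thesis using xs 0 by (simp add: \<phi>T)
    next
      case False
      have "frob \<phi> (ys[j := T x0 * ys ! j]) = T' (frob \<phi> (ys[j := x0 * ys ! j]))"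
        if "j < length ys" for j
        using Suc.hyps(1)[of "ys[j := x0 * ys!j]" j] that len Tc[of x0 "ys!j"] T[of x0 "ys!j"]
        by simp
      then have "(\<Sum>j<length ys. frob \<phi> (ys[j := T x0 * ys ! j])) = T' (\<Sum>j<length ys. frob \<phi> (ys[j := x0 * ys ! j]))"
        by (simp add: T's)
      moreover have "T' (\<phi> x0) * frob \<phi> ys = T' (\<phi> x0 * frob \<phi> ys)"
        by (metis T'm mult.commute)
      ultimately show ?thesis using xs 0 False
        by (simp add: frob_cons \<phi>T T'd)
    qed
  next
    case (Suc i')
    with Suc.prems xs have i': "i' < length ys" by simp
    then have ne: "ys \<noteq> []" by auto
    have step: "frob \<phi> ((ys[i' := T (ys!i')])[j := x0 * (ys[i' := T (ys!i')] ! j)]) =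
          T' (frob \<phi> (ys[j := x0 * ys ! j]))"
      if j: "j < length ys" for j
    proof (cases "j = i'")
      case True
      then show ?thesis using Suc.hyps(1)[of "ys[j := x0 * ys!j]" i'] len i' by (simp add: T)
    next
      case False
      then show ?thesis using Suc.hyps(1)[of "ys[j := x0 * ys!j]" i'] len i' j
        by (simp add: list_update_swap)
    qed
    have "T' (\<phi> x0 * frob \<phi> ys) = \<phi> x0 * T' (frob \<phi> ys)" by (simp add: T'm)
    then show ?thesis using xs Suc ne i' Suc.hyps(1)[of ys i'] len
      by (simp add: frob_cons step T's T'd)
  qed
qed

lemma frob_map:
  assumes hm: "\<And>a b. h (a * b) = h a * h b"
    and h'm: "\<And>a b. h' (a * b) = h' a * h' b"
    and h'a: "\<And>a b. h' (a + b) = h' a + h' b"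
    and \<phi>h: "\<And>x. \<phi>2 (h x) = h' (\<phi> x)"
  shows "frob \<phi>2 (map h xs) = h' (frob \<phi> xs)"
proof (induction "length xs" arbitrary: xs)
  case 0 then show ?case using h'a[of 0 0] by simp
next
  case (Suc n)
  have h'd: "h' (a - b) = h' a - h' b" for a b
    using h'a[of "a - b" b] by (simp add: algebra_simps)
  have h's: "h' (\<Sum>j<k. f j) = (\<Sum>j<k. h' (f j))" for f and k::nat
    by (induction k) (auto simp: h'a, metis h'd add_diff_cancel diff_self)
  obtain x0 ys where xs: "xs = x0 # ys" and len: "length ys = n" using Suc by (cases xs) auto
  show ?case
  proof (cases "ys = []")
    case True then show ?thesis using xs by (simp add: \<phi>h)
  next
    case False
    have "frob \<phi>2 ((map h ys)[j := h x0 * map h ys ! j]) = h' (frob \<phi> (ys[j := x0 * ys!j]))"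
      if "j < length ys" for j
      using that Suc.hyps(1)[of "ys[j := x0 * ys!j]"] len by (simp add: map_update hm)
    then show ?thesis using xs False Suc.hyps(1)[of ys] len
      by (simp add: frob_cons h'd h's h'm \<phi>h)
  qed
qed

text \<open>The recursion unfolded twice; the result is visibly symmetric in a and b up to the
  double sum, whose symmetry is shown in the next lemma.\<close>
lemma frob_expand_twice:
  assumes "R \<noteq> []"
  shows "frob \<phi> (a # b # R) =
     \<phi> a * (\<phi> b * frob \<phi> R - (\<Sum>j<length R. frob \<phi> (R[j := b * R!j])))
     - frob \<phi> (a * b # R)
     - (\<Sum>j<length R. \<phi> b * frob \<phi> (R[j := a * R!j])
         - (\<Sum>i<length R. frob \<phi> ((R[j := a * R!j])[i := b * (R[j := a * R!j] ! i)])))"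
proof -
  have "frob \<phi> (a # b # R) = \<phi> a * frob \<phi> (b # R) - (\<Sum>j<length (b # R). frob \<phi> ((b # R)[j := a * (b # R)!j]))"
    by (rule frob_cons) simp
  also have "(\<Sum>j<length (b # R). frob \<phi> ((b # R)[j := a * (b # R)!j])) =
     frob \<phi> (a * b # R) + (\<Sum>j<length R. frob \<phi> (b # R[j := a * R!j]))"
    by (simp add: sum.lessThan_Suc_shift del: sum.lessThan_Suc)
  also have "(\<Sum>j<length R. frob \<phi> (b # R[j := a * R!j])) = (\<Sum>j<length R. \<phi> b * frob \<phi> (R[j := a * R!j])
         - (\<Sum>i<length R. frob \<phi> ((R[j := a * R!j])[i := b * (R[j := a * R!j] ! i)])))"
    using assms by (intro sum.cong) (auto simp: frob_cons)
  finally show ?thesis using assms by (simp add: frob_cons)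
qed

lemma frob_swap: "frob \<phi> (a # b # R) = frob \<phi> (b # a # R)"
proof (cases "R = []")
  case True then show ?thesis by (simp add: mult.commute)
next
  case False
  let ?D = "\<lambda>a b. (\<Sum>j<length R. \<Sum>i<length R. frob \<phi> ((R[j := a * R!j])[i := b * (R[j := a * R!j] ! i)]))"
  have entry: "frob \<phi> ((R[j := a * R!j])[i := b * (R[j := a * R!j] ! i)]) =
           frob \<phi> ((R[i := b * R!i])[j := a * (R[i := b * R!i] ! j)])" if "i < length R" "j < length R" for i j
  proof (cases "i = j")
    case True then show ?thesis using that by (simp add: mult.commute mult.left_commute)
  next
    case False then show ?thesis using that by (simp add: list_update_swap)
  qed
  have D: "?D a b = ?D b a"
    by (subst sum.swap) (intro sum.cong refl, simp add: entry)
  have E: "frob \<phi> (a # b # R) =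
     \<phi> a * \<phi> b * frob \<phi> R - \<phi> a * (\<Sum>j<length R. frob \<phi> (R[j := b * R!j]))
     - frob \<phi> (a * b # R) - \<phi> b * (\<Sum>j<length R. frob \<phi> (R[j := a * R!j])) + ?D a b" for a b
    by (subst frob_expand_twice[OF False]) (simp add: sum_subtractf sum_distrib_left algebra_simps)
  show ?thesis unfolding E[of a b] E[of b a] using D by (simp add: mult.commute algebra_simps)
qed

text \<open>If Frobenius maps of arity n are symmetric, permuting the tail of an argument list of
  arity n+1 does not change the value: both recursion terms only depend on the multiset
  of the tail.\<close>
lemma frob_cons_mset_cong:
  assumes sym: "\<And>xs ys. length xs = n \<Longrightarrow> mset xs = mset ys \<Longrightarrow> frob \<phi> xs = frob \<phi> ys"
    and len: "length zs = n" and perm: "mset zs = mset zs'"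
  shows "frob \<phi> (x # zs) = frob \<phi> (x # zs')"
proof (cases "zs = []")
  case True then show ?thesis using perm by simp
next
  case False
  then have ne': "zs' \<noteq> []" using perm by auto
  have len': "length zs' = n" using len perm by (metis size_mset)
  define g where "g zs z = frob \<phi> (x * z # remove1 z zs)" for zs z
  have update_sum: "(\<Sum>j<length ws. frob \<phi> (ws[j := x * ws!j])) = sum_list (map (g ws) ws)"
    if "length ws = n" for ws
  proof -
    have "frob \<phi> (ws[j := x * ws!j]) = g ws (ws!j)" if "j < length ws" for j
    proof -
      have "mset (ws[j := x * ws!j]) = mset (x * ws!j # remove1 (ws!j) ws)"
        using that by (simp add: mset_update mset_remove1)
      then show ?thesis unfolding g_def using sym \<open>length ws = n\<close> by simp
    qed
    then have "(\<Sum>j<length ws. frob \<phi> (ws[j := x * ws!j])) = (\<Sum>j<length ws. g ws (ws!j))"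
      by (intro sum.cong) auto
    then show ?thesis by (simp add: sum_list_sum_nth atLeast0LessThan)
  qed
  have "sum_list (map (g zs) zs) = sum_list (map (g zs) zs')"
    by (metis mset_map sum_mset_sum_list perm)
  also have "\<dots> = sum_list (map (g zs') zs')"
  proof (intro arg_cong[where f=sum_list] map_cong refl)
    fix z assume z: "z \<in> set zs'"
    have "length (x * z # remove1 z zs) = n"
      using len perm z by (metis One_nat_def Suc_pred length_Cons length_pos_if_in_set length_remove1 set_mset_mset)
    then show "g zs z = g zs' z" unfolding g_def using sym perm by (simp add: mset_remove1)
  qed
  finally show ?thesis using update_sum[OF len] update_sum[OF len'] sym[OF len perm] False ne'
    by (simp add: frob_cons)
qed

lemma frob_mset: "mset xs = mset ys \<Longrightarrow> frob \<phi> xs = frob \<phi> ys"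
proof (induction "length xs" arbitrary: xs ys)
  case 0 then show ?case by simp
next
  case (Suc n)
  have sym: "frob \<phi> xs' = frob \<phi> ys'" if "length xs' = n" "mset xs' = mset ys'" for xs' ys'
    using Suc.hyps(1) that by blast
  obtain x xs' where xs: "xs = x # xs'" and lx: "length xs' = n" using Suc.hyps(2) by (cases xs) auto
  obtain y ys' where ys: "ys = y # ys'" using Suc.prems xs by (cases ys) auto
  show ?case
  proof (cases "x = y")
    case True
    then show ?thesis using Suc.prems xs ys frob_cons_mset_cong[OF sym lx] by simp
  next
    case False
    then have yin: "y \<in> set xs'" using Suc.prems xs ys
      by (metis insert_iff list.simps(15) set_mset_mset)
    define r where "r = remove1 y xs'"
    have m1: "mset xs' = mset (y # r)" using yin by (simp add: r_def)
    have "frob \<phi> xs = frob \<phi> (x # y # r)" using frob_cons_mset_cong[OF sym lx m1] xs by simp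
    also have "\<dots> = frob \<phi> (y # x # r)" by (rule frob_swap)
    also have "\<dots> = frob \<phi> (y # ys')"
    proof (rule frob_cons_mset_cong[OF sym])
      show "length (x # r) = n"
        using yin lx length_pos_if_in_set[OF yin] by (simp add: r_def length_remove1)
      show "mset (x # r) = mset ys'" using Suc.prems xs ys m1 by simp
    qed
    finally show ?thesis using ys by simp
  qed
qed

text \<open>Vanishing of all Frobenius maps of one arity N \<ge> 1 implies vanishing in every higher
  arity, since the recursion expresses Phi_{k+1} through arity-k values.\<close>
lemma frob_vanish_longer:
  assumes van: "\<And>xs. length xs = N \<Longrightarrow> frob \<psi> xs = 0" and N: "N \<ge> 1"
  shows "length xs \<ge> N \<Longrightarrow> frob \<psi> xs = 0"
proof (induction "length xs" arbitrary: xs)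
  case 0 then show ?case using N by simp
next
  case (Suc k)
  show ?case
  proof (cases "length xs = N")
    case True then show ?thesis by (rule van)
  next
    case False
    obtain x ys where xs: "xs = x # ys" and ly: "length ys = k" using Suc.hyps(2) by (cases xs) auto
    have kN: "k \<ge> N" using False Suc.prems Suc.hyps(2) ly by simp
    then have ne: "ys \<noteq> []" using N ly by auto
    have "frob \<psi> ys = 0" using Suc.hyps(1)[of ys] ly kN by simp
    moreover have "frob \<psi> (ys[j := x * ys ! j]) = 0" for j
      using Suc.hyps(1)[of "ys[j := x * ys ! j]"] ly kN by simp
    ultimately show ?thesis using xs ne by (simp add: frob_cons)
  qed
qed


text \<open>Bookkeeping for the Leibniz rule below: applying a derivation D after multiplying the
  j-th argument by x either hits that product (giving D x and x D) or another argument.\<close>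
lemma frob_double_update_sum:
  assumes Dm: "\<And>a b. D (a * b) = D a * b + a * D b"
    and add: "\<And>a b. \<phi> (a + b) = \<phi> a + \<phi> b"
  shows "(\<Sum>j<length ys. \<Sum>i<length ys. frob \<phi> ((ys[j := x * ys!j])[i := D ((ys[j := x * ys!j]) ! i)])) =
     (\<Sum>j<length ys. frob \<phi> (ys[j := D x * ys!j]))
     + (\<Sum>i<length ys. \<Sum>j<length ys. frob \<phi> ((ys[i := D (ys!i)])[j := x * ((ys[i := D (ys!i)]) ! j)]))"
proof -
  define A where "A j i = frob \<phi> ((ys[j := x * ys!j])[i := D ((ys[j := x * ys!j]) ! i)])" for j i
  define B where "B i j = frob \<phi> ((ys[i := D (ys!i)])[j := x * ((ys[i := D (ys!i)]) ! j)])" for i j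
  have AB: "A j i = (if i = j then frob \<phi> (ys[j := D x * ys!j]) else 0) + B i j"
    if "i < length ys" "j < length ys" for i j
  proof (cases "i = j")
    case True
    then show ?thesis using that frob_update_add[OF add, of j ys "D x * ys!j" "x * D (ys!j)"]
      by (simp add: A_def B_def Dm)
  next
    case False then show ?thesis using that by (simp add: A_def B_def list_update_swap)
  qed
  have "(\<Sum>j<length ys. \<Sum>i<length ys. A j i) =
        (\<Sum>j<length ys. frob \<phi> (ys[j := D x * ys!j]) + (\<Sum>i<length ys. B i j))"
    by (intro sum.cong refl) (simp add: AB sum.distrib)
  also have "\<dots> = (\<Sum>j<length ys. frob \<phi> (ys[j := D x * ys!j])) + (\<Sum>i<length ys. \<Sum>j<length ys. B i j)"
    by (simp add: sum.distrib sum.swap[of B])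
  finally show ?thesis by (simp add: A_def B_def)
qed

lemma frob_deriv:
  assumes Dm: "\<And>a b. D (a * b) = D a * b + a * D b"
    and D'm: "\<And>a b. D' (a * b) = D' a * b + a * D' b" and D'a: "\<And>a b. D' (a + b) = D' a + D' b"
    and \<phi>D: "\<And>x. \<phi> (D x) = D' (\<phi> x)"
    and add: "\<And>a b. \<phi> (a + b) = \<phi> a + \<phi> b"
  shows "D' (frob \<phi> xs) = (\<Sum>i<length xs. frob \<phi> (xs[i := D (xs ! i)]))"
proof (induction "length xs" arbitrary: xs)
  case 0 then show ?case using D'a[of 0 0] by simp
next
  case (Suc n)
  have D'd: "D' (a - b) = D' a - D' b" for a b
    using D'a[of "a - b" b] by (simp add: algebra_simps)
  have D's: "D' (\<Sum>j<k. f j) = (\<Sum>j<k. D' (f j))" for f and k :: nat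
    by (induction k) (auto simp: D'a, metis D'd add_diff_cancel diff_self)
  obtain x0 ys where xs: "xs = x0 # ys" and len: "length ys = n" using Suc by (cases xs) auto
  show ?case
  proof (cases "ys = []")
    case True then show ?thesis using xs by (simp add: \<phi>D)
  next
    case False
    let ?B = "\<lambda>i j. frob \<phi> ((ys[i := D (ys!i)])[j := x0 * ((ys[i := D (ys!i)]) ! j)])"
    have "D' (frob \<phi> xs) = D' (\<phi> x0 * frob \<phi> ys) - (\<Sum>j<length ys. D' (frob \<phi> (ys[j := x0 * ys!j])))"
      using xs False by (simp add: frob_cons D'd D's)
    also have "(\<Sum>j<length ys. D' (frob \<phi> (ys[j := x0 * ys!j]))) =
        (\<Sum>j<length ys. \<Sum>i<length ys. frob \<phi> ((ys[j := x0 * ys!j])[i := D ((ys[j := x0 * ys!j]) ! i)]))"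
      by (intro sum.cong refl) (simp add: Suc.hyps(1) len)
    also have "\<dots> = (\<Sum>j<length ys. frob \<phi> (ys[j := D x0 * ys!j])) + (\<Sum>i<length ys. \<Sum>j<length ys. ?B i j)"
      by (rule frob_double_update_sum[OF Dm add])
    finally have lhs: "D' (frob \<phi> xs) = \<phi> (D x0) * frob \<phi> ys + \<phi> x0 * (\<Sum>i<length ys. frob \<phi> (ys[i := D (ys!i)]))
        - ((\<Sum>j<length ys. frob \<phi> (ys[j := D x0 * ys!j])) + (\<Sum>i<length ys. \<Sum>j<length ys. ?B i j))"
      using Suc.hyps(1)[of ys] len by (simp add: D'm \<phi>D)
    have "(\<Sum>i<length xs. frob \<phi> (xs[i := D (xs ! i)])) =
          frob \<phi> (D x0 # ys) + (\<Sum>i<length ys. frob \<phi> (x0 # ys[i := D (ys!i)]))"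
      using xs by (simp add: sum.lessThan_Suc_shift del: sum.lessThan_Suc)
    also have "(\<Sum>i<length ys. frob \<phi> (x0 # ys[i := D (ys!i)])) =
         (\<Sum>i<length ys. \<phi> x0 * frob \<phi> (ys[i := D (ys!i)]) - (\<Sum>j<length ys. ?B i j))"
      using False by (intro sum.cong refl) (simp add: frob_cons)
    finally have rhs: "(\<Sum>i<length xs. frob \<phi> (xs[i := D (xs ! i)])) =
        (\<phi> (D x0) * frob \<phi> ys - (\<Sum>j<length ys. frob \<phi> (ys[j := D x0 * ys!j])))
        + (\<Sum>i<length ys. \<phi> x0 * frob \<phi> (ys[i := D (ys!i)]) - (\<Sum>j<length ys. ?B i j))"
      using False by (simp add: frob_cons)
    show ?thesis unfolding lhs rhs
      by (simp add: sum_subtractf sum_distrib_left algebra_simps)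
  qed
qed


section \<open>Polarisation\<close>

lemma real_poly_zero:
  fixes c :: "nat \<Rightarrow> 'v::real_vector"
  assumes "\<forall>t::real. (\<Sum>i\<le>p. t ^ i *\<^sub>R c i) = 0"
  shows "\<forall>i\<le>p. c i = 0"
  using assms
proof (induction p arbitrary: c)
  case 0
  then show ?case using spec[OF 0, of 0] by simp
next
  case (Suc p)
  define d where "d i = ((2::real) ^ i - 2 ^ Suc p) *\<^sub>R c i" for i
  have "\<forall>t::real. (\<Sum>i\<le>p. t ^ i *\<^sub>R d i) = 0"
  proof
    fix t :: real
    have "(\<Sum>i\<le>p. t ^ i *\<^sub>R d i) = (\<Sum>i\<le>Suc p. (2 * t) ^ i *\<^sub>R c i) - 2 ^ Suc p *\<^sub>R (\<Sum>i\<le>Suc p. t ^ i *\<^sub>R c i)"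
      by (simp add: d_def scaleR_sum_right sum_subtractf[symmetric] scaleR_diff_left algebra_simps)
    also have "\<dots> = 0"
      using Suc.prems[rule_format, of t] Suc.prems[rule_format, of "2 * t"] by simp
    finally show "(\<Sum>i\<le>p. t ^ i *\<^sub>R d i) = 0" .
  qed
  from Suc.IH[OF this] have d0: "\<forall>i\<le>p. d i = 0" .
  have ci: "c i = 0" if "i \<le> p" for i
  proof -
    have "(2::real) ^ i < 2 ^ Suc p" using that by (intro power_strict_increasing) auto
    then show ?thesis using d0 that by (auto simp: d_def)
  qed
  have "(\<Sum>i\<le>Suc p. (1::real) ^ i *\<^sub>R c i) = 0" using Suc.prems by blast
  then have "c (Suc p) = 0" using ci by simp
  then show ?case using ci le_Suc_eq by auto
qed

lemma frob_linear_at: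
  fixes \<psi> :: "'a::{real_algebra_1,comm_ring_1} \<Rightarrow> 'c::{real_algebra_1,comm_ring_1}"
  assumes lin: "linear \<psi>"
  shows "frob \<psi> (L @ (x + t *\<^sub>R y) # M) = frob \<psi> (L @ x # M) + t *\<^sub>R frob \<psi> (L @ y # M)"
proof -
  let ?i = "length L"
  have i: "?i < length (L @ y # M)" by simp
  have "frob \<psi> (L @ (x + t *\<^sub>R y) # M) = frob \<psi> ((L @ y # M)[?i := x + t *\<^sub>R y])" by simp
  also have "\<dots> = frob \<psi> ((L @ y # M)[?i := x]) + frob \<psi> ((L @ y # M)[?i := t *\<^sub>R ((L @ y # M) ! ?i)])"
    using frob_update_add[OF linear_add[OF lin] i] by simp
  also have "frob \<psi> ((L @ y # M)[?i := t *\<^sub>R ((L @ y # M) ! ?i)]) = t *\<^sub>R frob \<psi> (L @ y # M)"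
    by (rule frob_update_operator[OF _ _ _ _ i]) (simp_all add: scaleR_right_distrib linear_scale[OF lin])
  finally show ?thesis by simp
qed

lemma real_poly_add_shift:
  fixes c d :: "nat \<Rightarrow> 'v::real_vector" and p :: nat and t :: real
  defines "e \<equiv> \<lambda>i. (if i \<le> p then c i else 0) + (if i = 0 then 0 else d (i - 1))"
  shows "(\<Sum>i\<le>p. t ^ i *\<^sub>R c i) + t *\<^sub>R (\<Sum>i\<le>p. t ^ i *\<^sub>R d i) = (\<Sum>i\<le>Suc p. t ^ i *\<^sub>R e i)"
proof -
  have "(\<Sum>i\<le>Suc p. t ^ i *\<^sub>R e i) = (\<Sum>i\<le>Suc p. t ^ i *\<^sub>R (if i \<le> p then c i else 0))
       + (\<Sum>i\<le>Suc p. t ^ i *\<^sub>R (if i = 0 then 0 else d (i - 1)))"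
    by (simp add: e_def scaleR_right_distrib sum.distrib)
  also have "(\<Sum>i\<le>Suc p. t ^ i *\<^sub>R (if i = 0 then 0 else d (i - 1))) = (\<Sum>i\<le>p. t ^ Suc i *\<^sub>R d i)"
    by (subst sum.atMost_Suc_shift) simp
  finally show ?thesis by (simp add: scaleR_sum_right)
qed

lemma frob_diagonal_expansion:
  fixes \<psi> :: "'a::{real_algebra_1,comm_ring_1} \<Rightarrow> 'c::{real_algebra_1,comm_ring_1}"
  assumes lin: "linear \<psi>"
  shows "\<exists>c. (\<forall>t. frob \<psi> (replicate p (a + t *\<^sub>R b) @ M) = (\<Sum>i\<le>p. t ^ i *\<^sub>R c i))
            \<and> c 1 = real p *\<^sub>R frob \<psi> (replicate (p - 1) a @ b # M)"
proof (induction p arbitrary: M)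
  case 0
  show ?case by (rule exI[of _ "\<lambda>i. if i = 0 then frob \<psi> M else 0"]) simp
next
  case (Suc p)
  obtain c where c: "\<forall>t. frob \<psi> (replicate p (a + t *\<^sub>R b) @ a # M) = (\<Sum>i\<le>p. t ^ i *\<^sub>R c i)"
    and c1: "c 1 = real p *\<^sub>R frob \<psi> (replicate (p - 1) a @ b # a # M)"
    using Suc.IH[of "a # M"] by blast
  obtain d where d: "\<forall>t. frob \<psi> (replicate p (a + t *\<^sub>R b) @ b # M) = (\<Sum>i\<le>p. t ^ i *\<^sub>R d i)"
    using Suc.IH[of "b # M"] by blast
  have d0: "d 0 = frob \<psi> (replicate p a @ b # M)"
    using spec[OF d, of 0] by (simp add: power_0_left sum.atMost_shift del: sum.atMost_Suc)
  have c1': "(if 1 \<le> p then c 1 else 0) = real p *\<^sub>R frob \<psi> (replicate p a @ b # M)"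
  proof (cases p)
    case (Suc q)
    have "frob \<psi> (replicate (p - 1) a @ b # a # M) = frob \<psi> (replicate p a @ b # M)"
      by (rule frob_mset) (simp add: Suc)
    then show ?thesis using c1 Suc by simp
  qed simp
  define e where "e i = (if i \<le> p then c i else 0) + (if i = 0 then 0 else d (i - 1))" for i
  show ?case
  proof (intro exI conjI allI)
    fix t
    have "frob \<psi> (replicate (Suc p) (a + t *\<^sub>R b) @ M) = frob \<psi> (replicate p (a + t *\<^sub>R b) @ (a + t *\<^sub>R b) # M)"
      by (simp add: replicate_app_Cons_same)
    also have "\<dots> = frob \<psi> (replicate p (a + t *\<^sub>R b) @ a # M) + t *\<^sub>R frob \<psi> (replicate p (a + t *\<^sub>R b) @ b # M)"
      by (rule frob_linear_at[OF lin])
    also have "\<dots> = (\<Sum>i\<le>Suc p. t ^ i *\<^sub>R e i)"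
      using c d real_poly_add_shift[where c=c and d=d and p=p and t=t] by (simp add: e_def)
    finally show "frob \<psi> (replicate (Suc p) (a + t *\<^sub>R b) @ M) = (\<Sum>i\<le>Suc p. t ^ i *\<^sub>R e i)" .
  next
    have "e 1 = (if 1 \<le> p then c 1 else 0) + d 0" by (simp add: e_def)
    then show "e 1 = real (Suc p) *\<^sub>R frob \<psi> (replicate (Suc p - 1) a @ b # M)"
      by (simp only: c1' d0) (simp add: algebra_simps)
  qed
qed

text \<open>The arguments are replaced by the diagonal one at a time, reading
  off the linear coefficient of the polynomial above.\<close>
lemma frob_polarize:
  fixes \<psi> :: "'a::{real_algebra_1,comm_ring_1} \<Rightarrow> 'c::{real_algebra_1,comm_ring_1}"
  assumes lin: "linear \<psi>" and diag: "\<And>a. frob \<psi> (replicate K a) = 0" and len: "length xs = K"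
  shows "frob \<psi> xs = 0"
proof -
  have "\<forall>a M. length M = j \<longrightarrow> frob \<psi> (replicate (K - j) a @ M) = 0" if "j \<le> K" for j
    using that
  proof (induction j)
    case 0 then show ?case by (simp add: diag)
  next
    case (Suc j)
    show ?case
    proof (intro allI impI)
      fix a and M :: "'a list" assume lM: "length M = Suc j"
      then obtain b M' where M: "M = b # M'" and lM': "length M' = j" by (cases M) auto
      define p where "p = K - j"
      have p1: "p \<ge> 1" using Suc.prems by (simp add: p_def)
      obtain c where c: "\<forall>t. frob \<psi> (replicate p (a + t *\<^sub>R b) @ M') = (\<Sum>i\<le>p. t ^ i *\<^sub>R c i)"
        and c1: "c 1 = real p *\<^sub>R frob \<psi> (replicate (p - 1) a @ b # M')"
        using frob_diagonal_expansion[OF lin] by blast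
      have "\<forall>t::real. (\<Sum>i\<le>p. t ^ i *\<^sub>R c i) = 0"
        using c Suc.IH Suc.prems lM' by (simp add: p_def)
      from real_poly_zero[OF this] p1 have "c 1 = 0" by simp
      with c1 p1 have "frob \<psi> (replicate (p - 1) a @ b # M') = 0" by simp
      then show "frob \<psi> (replicate (K - Suc j) a @ M) = 0" by (simp add: M p_def)
    qed
  qed
  from this[of K] len show ?thesis by simp
qed


section \<open>Real scalars, exponentials and a uniqueness theorem for linear ODEs\<close>

text \<open>The exponential and the characteristic function let the reals act through a scalar map
  sc.  Both scalar actions that occur, on an algebra and on power series over it, are multiplication by the
  image of a ring homomorphism from the reals; this locale collects what is needed.\<close>
locale real_hom =
  fixes e :: "real \<Rightarrow> 'y::comm_ring_1"
  assumes e_mult: "e (r * s) = e r * e s" and e_add: "e (r + s) = e r + e s" and e_one: "e 1 = 1"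
begin

lemma e_zero: "e 0 = 0" using e_add[of 0 0] by simp

lemma e_of_nat: "e (of_nat n) = of_nat n"
  by (induction n) (auto simp: e_zero e_add e_one)

lemma e_minus: "e (- r) = - e r"
  using e_add[of r "-r"] by (simp add: e_zero eq_neg_iff_add_eq_0 add.commute)

text \<open>The coefficient identity behind exp' = exp.\<close>
lemma e_fact: "e (1 / fact (Suc k)) * of_nat (Suc k) = e (1 / fact k)"
proof -
  have "e (1 / fact (Suc k)) * of_nat (Suc k) = e (1 / fact (Suc k) * of_nat (Suc k))"
    by (simp only: e_of_nat[symmetric] e_mult)
  also have "1 / fact (Suc k) * of_nat (Suc k) = (1 / fact k :: real)"
    by (simp del: of_nat_Suc)
  finally show ?thesis .
qed

text \<open>There is no additive torsion: a nonzero real scalar can be cancelled.\<close>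
lemma e_reciprocal_cancel:
  assumes "r \<noteq> 0" and "e (1 / r) * a = 0"
  shows "a = 0"
proof -
  have "a = e (r * (1 / r)) * a" using assms(1) by (simp add: e_one)
  also have "\<dots> = e r * (e (1 / r) * a)" by (simp only: e_mult mult.assoc)
  finally show ?thesis using assms(2) by simp
qed

text \<open>Since L(0) = 0, the coefficient of z^k of exp(L) only involves the powers L^j, j \<le> k.\<close>
lemma fexp_nth:
  assumes sc: "\<And>r v. sc r v = e r * v" and L0: "L $ 0 = 0" and kN: "k \<le> N"
  shows "fexp sc L $ k = (\<Sum>j\<le>N. e (1 / fact j) * (L ^ j) $ k)"
proof -
  have "fexp sc L $ k = (\<Sum>j\<le>k. e (1 / fact j) * (L ^ j) $ k)"
    by (simp add: fexp_def sc)
  also have "\<dots> = (\<Sum>j\<le>N. e (1 / fact j) * (L ^ j) $ k)"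
    by (rule sum.mono_neutral_left) (use kN startsby_zero_power_prefix[OF L0] in auto)
  finally show ?thesis .
qed

lemma fexp_0:
  assumes sc: "\<And>r v. sc r v = e r * v"
  shows "fexp sc L $ 0 = 1"
  by (simp add: fexp_def sc e_one)

lemma fexp_deriv:
  assumes sc: "\<And>r v. sc r v = e r * v" and L0: "L $ 0 = 0"
  shows "fps_deriv (fexp sc L) = fps_deriv L * fexp sc L"
proof (rule fps_ext)
  fix k
  have "fps_deriv (fexp sc L) $ k = of_nat (Suc k) * (\<Sum>j\<le>Suc k. e (1 / fact j) * (L ^ j) $ Suc k)"
    by (simp add: fexp_nth[OF sc L0, of "Suc k" "Suc k"])
  also have "\<dots> = (\<Sum>j\<le>Suc k. e (1 / fact j) * (fps_deriv (L ^ j)) $ k)"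
    by (simp add: sum_distrib_left algebra_simps)
  also have "\<dots> = (\<Sum>j\<le>k. e (1 / fact (Suc j)) * (fps_deriv (L ^ Suc j)) $ k)"
    by (simp add: sum.atMost_Suc_shift del: sum.atMost_Suc power_Suc)
  also have "\<dots> = (\<Sum>j\<le>k. (e (1 / fact (Suc j)) * of_nat (Suc j)) * (fps_deriv L * L ^ j) $ k)"
    by (simp only: fps_deriv_power fps_mult_left_const_nth mult.assoc diff_Suc_1)
  also have "\<dots> = (\<Sum>j\<le>k. e (1 / fact j) * (fps_deriv L * L ^ j) $ k)"
    by (simp only: e_fact)
  also have "\<dots> = (\<Sum>i=0..k. fps_deriv L $ i * (\<Sum>j\<le>k. e (1 / fact j) * (L ^ j) $ (k - i)))"
    by (simp add: fps_mult_nth sum_distrib_left sum.swap[of _ "{0..k}"] algebra_simps)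
  also have "\<dots> = (\<Sum>i=0..k. fps_deriv L $ i * fexp sc L $ (k - i))"
    by (intro sum.cong refl) (simp add: fexp_nth[OF sc L0, of _ k])
  also have "\<dots> = (fps_deriv L * fexp sc L) $ k" by (simp add: fps_mult_nth)
  finally show "fps_deriv (fexp sc L) $ k = (fps_deriv L * fexp sc L) $ k" .
qed

text \<open>Uniqueness for F' = L' F: the difference H of two solutions satisfies
  (k+1) H_{k+1} = sum_{i<=k} L'_i H_{k-i}, and there is no additive torsion.\<close>
lemma ode_unique:
  fixes F G L :: "'y fps"
  assumes F: "fps_deriv F = fps_deriv L * F" and G: "fps_deriv G = fps_deriv L * G"
    and F0: "F $ 0 = G $ 0"
  shows "F = G"
proof -
  define H where "H = F - G"
  have H: "fps_deriv H = fps_deriv L * H" using F G by (simp add: H_def algebra_simps)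
  have "\<forall>i\<le>k. H $ i = 0" for k
  proof (induction k)
    case 0 then show ?case using F0 by (simp add: H_def)
  next
    case (Suc k)
    have "e (of_nat (Suc k)) * H $ Suc k = fps_deriv H $ k" by (simp only: e_of_nat fps_deriv_nth Suc_eq_plus1)
    also have "\<dots> = (\<Sum>i=0..k. fps_deriv L $ i * H $ (k - i))" by (simp only: H fps_mult_nth)
    also have "\<dots> = 0" using Suc by (intro sum.neutral) auto
    finally have "H $ Suc k = 0"
      using e_reciprocal_cancel[of "1 / of_nat (Suc k)" "H $ Suc k"] by simp
    then show ?case using Suc le_Suc_eq by auto
  qed
  then have "H = 0" by (intro fps_ext) auto
  then show ?thesis by (simp add: H_def)
qed

end

lemma real_hom_of_real: "real_hom (of_real :: real \<Rightarrow> 'a::{real_algebra_1,comm_ring_1})"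
  by unfold_locales simp_all

lemma real_hom_fps: "real_hom (\<lambda>r. fps_const (of_real r) :: 'a::{real_algebra_1,comm_ring_1} fps)"
  by unfold_locales simp_all


section \<open>Diagonal values and the characteristic function\<close>

text \<open>Diagonal values P_k(x) = Phi_k(x,...,x) of the Frobenius maps, with P_0 = 1.\<close>
definition frob_diag :: "('x::comm_ring_1 \<Rightarrow> 'y::comm_ring_1) \<Rightarrow> nat \<Rightarrow> 'x \<Rightarrow> 'y" where
  "frob_diag \<phi> k x = (if k = 0 then 1 else frob \<phi> (replicate k x))"

text \<open>The recursion for an argument list y, x, ..., x; by symmetry all k summands agree.\<close>
lemma frob_cons_replicate:
  "frob \<phi> (y # replicate k x) = \<phi> y * frob_diag \<phi> k x - of_nat k * frob \<phi> (y * x # replicate (k - 1) x)"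
proof (cases k)
  case 0 then show ?thesis by (simp add: frob_diag_def)
next
  case (Suc k')
  have "frob \<phi> ((replicate k x)[j := y * replicate k x ! j]) = frob \<phi> (y * x # replicate (k - 1) x)"
    if "j < k" for j
  proof (rule frob_mset)
    have "mset ((replicate k x)[j := y * x]) = add_mset (y * x) (mset (replicate k x) - {#x#})"
      using that by (simp add: mset_update)
    also have "\<dots> = mset (y * x # replicate (k - 1) x)"
      using Suc by simp
    finally show "mset ((replicate k x)[j := y * replicate k x ! j]) = mset (y * x # replicate (k - 1) x)"
      using that by simp
  qed
  then have "(\<Sum>j<length (replicate k x). frob \<phi> ((replicate k x)[j := y * replicate k x ! j]))
      = of_nat k * frob \<phi> (y * x # replicate (k - 1) x)"
    by simp
  then show ?thesis using Suc by (simp only: frob_cons frob_diag_def) simp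
qed

context real_hom
begin

lemma frob_diag_newton:
  "e (1 / fact k) * frob \<phi> (y # replicate k x) =
    (\<Sum>i\<le>k. e ((-1) ^ i) * \<phi> (y * x ^ i) * e (1 / fact (k - i)) * frob_diag \<phi> (k - i) x)"
proof (induction k arbitrary: y)
  case 0 then show ?case using e_one by (simp add: frob_diag_def)
next
  case (Suc k)
  have "e (1 / fact (Suc k)) * frob \<phi> (y # replicate (Suc k) x)
      = e (1 / fact (Suc k)) * \<phi> y * frob_diag \<phi> (Suc k) x
        - (e (1 / fact (Suc k)) * of_nat (Suc k)) * frob \<phi> (y * x # replicate k x)"
    by (subst frob_cons_replicate) (simp add: algebra_simps)
  also have "\<dots> = e (1 / fact (Suc k)) * \<phi> y * frob_diag \<phi> (Suc k) x -
       (\<Sum>i\<le>k. e ((-1) ^ i) * \<phi> (y * x * x ^ i) * e (1 / fact (k - i)) * frob_diag \<phi> (k - i) x)"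
    by (simp only: e_fact Suc.IH)
  also have "\<dots> = (\<Sum>i\<le>Suc k. e ((-1) ^ i) * \<phi> (y * x ^ i) * e (1 / fact (Suc k - i)) * frob_diag \<phi> (Suc k - i) x)"
    by (subst sum.atMost_Suc_shift) (simp add: e_one e_minus sum_negf mult.assoc)
  finally show ?case .
qed

text \<open>Both sides solve F' = L' F, F(0) = 1 for
  L = phi(ln(1+xz)), whose derivative has coefficients (-1)^i phi(x^(i+1)).\<close>
lemma char_fun_gen_diag:
  assumes sy: "\<And>r v. sy r v = e r * v"
    and add: "\<And>a b. \<phi> (a + b) = \<phi> a + \<phi> b" and \<phi>sc: "\<And>r v. \<phi> (sx r v) = sy r (\<phi> v)"
  shows "char_fun_gen sx sy \<phi> x = Abs_fps (\<lambda>k. e (1 / fact k) * frob_diag \<phi> k x)"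
proof -
  define L where "L = Abs_fps (\<lambda>k. \<phi> (fln1p sx x $ k))"
  define S where "S = Abs_fps (\<lambda>k. e (1 / fact k) * frob_diag \<phi> k x)"
  have L0: "L $ 0 = 0" using add[of 0 0] by (simp add: L_def fln1p_def)
  have dL: "fps_deriv L $ i = e ((-1) ^ i) * \<phi> (x * x ^ i)" for i
  proof -
    have "fps_deriv L $ i = e (real (Suc i) * ((-1) ^ (Suc i + 1) / real (Suc i))) * \<phi> (x ^ Suc i)"
      by (simp only: e_mult e_of_nat) (simp add: L_def fln1p_def \<phi>sc sy mult.assoc del: of_nat_Suc power_Suc)
    then show ?thesis by simp
  qed
  have "fps_deriv S = fps_deriv L * S"
  proof (rule fps_ext)
    fix k
    have "fps_deriv S $ k = (e (1 / fact (Suc k)) * of_nat (Suc k)) * frob \<phi> (x # replicate k x)"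
      by (simp add: S_def frob_diag_def algebra_simps del: of_nat_Suc)
    also have "\<dots> = (\<Sum>i\<le>k. e ((-1) ^ i) * \<phi> (x * x ^ i) * e (1 / fact (k - i)) * frob_diag \<phi> (k - i) x)"
      by (simp only: e_fact frob_diag_newton)
    also have "\<dots> = (\<Sum>i=0..k. fps_deriv L $ i * S $ (k - i))"
      by (simp only: dL) (simp add: S_def atLeast0AtMost mult.assoc)
    also have "\<dots> = (fps_deriv L * S) $ k" by (simp add: fps_mult_nth)
    finally show "fps_deriv S $ k = (fps_deriv L * S) $ k" .
  qed
  moreover have "fexp sy L $ 0 = S $ 0" by (simp add: fexp_0[OF sy] S_def frob_diag_def e_one)
  ultimately have "fexp sy L = S" using ode_unique fexp_deriv[OF sy L0] by blast
  then show ?thesis by (simp add: char_fun_gen_def L_def S_def)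
qed

end

lemma char_fun_diag:
  fixes \<phi> :: "'a::{real_algebra_1,comm_ring_1} \<Rightarrow> 'b::{real_algebra_1,comm_ring_1}"
  assumes "linear \<phi>"
  shows "char_fun \<phi> a = Abs_fps (\<lambda>k. of_real (1 / fact k) * frob_diag \<phi> k a)"
  unfolding char_fun_def
  by (rule real_hom.char_fun_gen_diag[OF real_hom_of_real])
    (simp_all add: scaleR_conv_of_real[symmetric] linear_add[OF assms] linear_scale[OF assms])


section \<open>Extending a map coefficientwise to power series\<close>

lemma fps_map_coeff_nth [simp]: "fps_map_coeff \<phi> p $ i = \<phi> (p $ i)"
  by (simp add: fps_map_coeff_def)

lemma fps_map_coeff_add:
  "(\<And>a b. \<phi> (a + b) = \<phi> a + \<phi> b) \<Longrightarrow> fps_map_coeff \<phi> (p + q) = fps_map_coeff \<phi> p + fps_map_coeff \<phi> q"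
  by (intro fps_ext) simp

lemma fps_map_coeff_X_mult:
  fixes \<phi> :: "'x::comm_ring_1 \<Rightarrow> 'y::comm_ring_1"
  shows "\<phi> 0 = 0 \<Longrightarrow> fps_map_coeff \<phi> (fps_X * p) = fps_X * fps_map_coeff \<phi> p"
  by (intro fps_ext) simp

lemma fps_map_coeff_const:
  fixes \<phi> :: "'x::comm_ring_1 \<Rightarrow> 'y::comm_ring_1"
  shows "\<phi> 0 = 0 \<Longrightarrow> fps_map_coeff \<phi> (fps_const b) = fps_const (\<phi> b)"
  by (intro fps_ext) simp

lemma of_nat_mult_eq_scaleR: "of_nat k * (b::'a::real_algebra_1) = real k *\<^sub>R b"
  by (simp add: scaleR_conv_of_real)

lemma fps_map_coeff_deriv:
  fixes \<phi> :: "'b::{real_algebra_1,comm_ring_1} \<Rightarrow> 'c::{real_algebra_1,comm_ring_1}"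
  assumes "linear \<phi>"
  shows "fps_map_coeff \<phi> (fps_deriv p) = fps_deriv (fps_map_coeff \<phi> p)"
  by (intro fps_ext) (simp add: of_nat_mult_eq_scaleR linear_scale[OF assms] del: of_nat_Suc of_nat_add)

lemma fps_map_coeff_scale:
  fixes \<phi> :: "'b::{real_algebra_1,comm_ring_1} \<Rightarrow> 'c::{real_algebra_1,comm_ring_1}"
  assumes "linear \<phi>"
  shows "fps_map_coeff \<phi> (fps_scale r p) = fps_scale r (fps_map_coeff \<phi> p)"
  by (intro fps_ext) (simp add: fps_scale_def linear_scale[OF assms])

lemma fps_scale_eq_const_mult: "fps_scale r (p::'a::real_algebra_1 fps) = fps_const (of_real r) * p"
  by (intro fps_ext) (simp add: fps_scale_def scaleR_conv_of_real)

lemma frob_fps_map_coeff_const: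
  fixes \<phi> :: "'x::comm_ring_1 \<Rightarrow> 'y::comm_ring_1"
  assumes "\<And>a b. \<phi> (a + b) = \<phi> a + \<phi> b"
  shows "frob (fps_map_coeff \<phi>) (map fps_const xs) = fps_const (frob \<phi> xs)"
  using assms[of 0 0] by (intro frob_map) (simp_all add: fps_map_coeff_const)

lemma frob_fps_map_coeff_split:
  fixes \<phi> :: "'x::comm_ring_1 \<Rightarrow> 'y::comm_ring_1"
  assumes add: "\<And>a b. \<phi> (a + b) = \<phi> a + \<phi> b" and i: "i < length xs"
  shows "frob (fps_map_coeff \<phi>) (xs[i := p]) =
    frob (fps_map_coeff \<phi>) (xs[i := fps_const (p $ 0)]) + fps_X * frob (fps_map_coeff \<phi>) (xs[i := fps_shift 1 p])"
proof -
  let ?M = "fps_map_coeff \<phi>"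
  have \<phi>0: "\<phi> 0 = 0" using add[of 0 0] by simp
  have p: "p = fps_const (p $ 0) + fps_X * fps_shift 1 p"
    by (intro fps_ext) (simp add: fps_X_mult_nth)
  have "frob ?M (xs[i := p]) = frob ?M (xs[i := fps_const (p $ 0)]) + frob ?M (xs[i := fps_X * fps_shift 1 p])"
    by (subst p, rule frob_update_add) (simp_all add: fps_map_coeff_add[OF add] i)
  also have "frob ?M (xs[i := fps_X * fps_shift 1 p]) = fps_X * frob ?M (xs[i := fps_shift 1 p])"
    using frob_update_operator[of "\<lambda>q. fps_X * q" "\<lambda>q. fps_X * q" ?M i "xs[i := fps_shift 1 p]"] i
    by (simp add: fps_map_coeff_X_mult \<phi>0 mult.left_commute distrib_left)
  finally show ?thesis .
qed

text \<open>Induction on the coefficient index d and, inside, on the number of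
  non-constant arguments, removed one at a time by the splitting above.\<close>
lemma frob_fps_map_coeff_vanish:
  fixes \<phi> :: "'x::comm_ring_1 \<Rightarrow> 'y::comm_ring_1"
  assumes add: "\<And>a b. \<phi> (a + b) = \<phi> a + \<phi> b"
    and van: "\<And>xs. length xs = N \<Longrightarrow> frob \<phi> xs = 0"
    and len: "length xs = N"
  shows "frob (fps_map_coeff \<phi>) xs = 0"
proof -
  let ?M = "fps_map_coeff \<phi>"
  have "\<forall>xs. length xs = N \<longrightarrow> frob ?M xs $ d = 0" for d
  proof (induction d rule: less_induct)
    case (less d)
    have "frob ?M xs $ d = 0"
      if "length xs = N" and "\<forall>j. i \<le> j \<longrightarrow> j < N \<longrightarrow> xs ! j = fps_const (xs ! j $ 0)" for i xs
      using that
    proof (induction i arbitrary: xs)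
      case 0
      then have "xs = map fps_const (map (\<lambda>p. p $ 0) xs)" by (intro nth_equalityI) auto
      then show ?case using 0 van frob_fps_map_coeff_const[OF add, of "map (\<lambda>p. p $ 0) xs"]
        by (metis fps_zero_nth fps_const_0_eq_0 length_map)
    next
      case (Suc i)
      show ?case
      proof (cases "i < N")
        case False
        then show ?thesis using Suc by auto
      next
        case True
        have "frob ?M (xs[i := fps_const (xs ! i $ 0)]) $ d = 0"
          using Suc by (auto simp: nth_list_update)
        moreover have "(fps_X * frob ?M (xs[i := fps_shift 1 (xs ! i)])) $ d = 0"
          using less.IH[of "d - 1"] Suc.prems by (cases d) (simp_all add: fps_X_mult_nth)
        ultimately show ?thesis
          using frob_fps_map_coeff_split[OF add, of i xs "xs ! i"] True Suc.prems by simp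
      qed
    qed
    then show ?case by (metis leD)
  qed
  then show ?thesis using len by (intro fps_ext) simp
qed


lemma fps_mult_nth_above:
  fixes p q :: "'a::comm_ring_1 fps"
  assumes "\<forall>i>a. p $ i = 0" "\<forall>i>b. q $ i = 0"
  shows "\<forall>i>a + b. (p * q) $ i = 0"
proof (intro allI impI)
  fix i assume i: "i > a + b"
  have "p $ j * q $ (i - j) = 0" for j
    using assms i by (cases "j > a") auto
  then show "(p * q) $ i = 0" by (simp add: fps_mult_nth)
qed

lemma sum_list_update_add: "j < length es \<Longrightarrow> sum_list (es[j := e + es ! j]) = e + sum_list (es::nat list)"
  by (induction es arbitrary: j) (auto split: nat.split)

text \<open>A Frobenius map of the extension is a polynomial in z of degree at most the sum of the
  degrees of its arguments (the recursion only multiplies arguments together).\<close>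
lemma frob_fps_map_coeff_degree:
  fixes \<phi> :: "'b::comm_ring_1 \<Rightarrow> 'c::comm_ring_1"
  assumes \<phi>0: "\<phi> 0 = 0"
  shows "length es = length xs \<Longrightarrow> (\<forall>i<length xs. \<forall>k>es ! i. xs ! i $ k = 0) \<Longrightarrow>
     \<forall>k>sum_list es. frob (fps_map_coeff \<phi>) xs $ k = 0"
proof (induction "length xs" arbitrary: xs es)
  case 0 then show ?case by simp
next
  case (Suc n)
  let ?M = "fps_map_coeff \<phi>"
  obtain x ys where xs: "xs = x # ys" and ly: "length ys = n" using Suc.hyps(2) by (cases xs) auto
  obtain e es' where es: "es = e # es'" and le: "length es' = n" using Suc.prems(1) Suc.hyps(2) by (cases es) auto
  have dx: "\<forall>k>e. x $ k = 0" using Suc.prems(2) xs es by force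
  have dys: "\<forall>i<length ys. \<forall>k>es' ! i. ys ! i $ k = 0" using Suc.prems(2) xs es by force
  have dMx: "\<forall>k>e. ?M x $ k = 0" using dx \<phi>0 by simp
  show ?case
  proof (cases "ys = []")
    case True then show ?thesis using xs es dMx le ly by simp
  next
    case False
    have d1: "\<forall>k>sum_list es'. frob ?M ys $ k = 0"
      using Suc.hyps(1)[of ys es'] ly le dys by simp
    have d2: "\<forall>k>e + sum_list es'. frob ?M (ys[j := x * ys ! j]) $ k = 0" if j: "j < length ys" for j
    proof -
      have "\<forall>i<length ys. \<forall>k>es'[j := e + es' ! j] ! i. ys[j := x * ys ! j] ! i $ k = 0"
        using fps_mult_nth_above[OF dx, where q="ys ! j" and b="es' ! j"] dys j le ly
        by (auto simp: nth_list_update)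
      then show ?thesis
        using Suc.hyps(1)[of "ys[j := x * ys ! j]" "es'[j := e + es' ! j]"] sum_list_update_add[of j es' e] j ly le
        by simp
    qed
    show ?thesis
    proof (intro allI impI)
      fix k assume k: "k > sum_list es"
      have "(?M x * frob ?M ys) $ k = 0"
        using fps_mult_nth_above[OF dMx d1] k es by simp
      moreover have "(\<Sum>j<length ys. frob ?M (ys[j := x * ys ! j])) $ k = 0"
        using d2 k es by (simp add: fps_sum_nth)
      ultimately show "frob ?M xs $ k = 0" using xs False by (simp add: frob_cons)
    qed
  qed
qed

lemma frob_diag_fps_map_coeff_degree:
  fixes \<phi> :: "'b::comm_ring_1 \<Rightarrow> 'c::comm_ring_1"
  assumes "\<phi> 0 = 0" and "\<forall>i>m. u $ i = 0" and "i > k * m"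
  shows "frob_diag (fps_map_coeff \<phi>) k u $ i = 0"
proof (cases "k = 0")
  case True then show ?thesis using assms(3) by (simp add: frob_diag_def)
next
  case False
  have "\<forall>i>sum_list (replicate k m). frob (fps_map_coeff \<phi>) (replicate k u) $ i = 0"
    by (rule frob_fps_map_coeff_degree) (simp_all add: assms(1,2))
  then show ?thesis using False assms(3) by (simp add: frob_diag_def sum_list_replicate)
qed

lemma frob_diag_fps_map_coeff_nth0:
  fixes \<phi> :: "'b::comm_ring_1 \<Rightarrow> 'c::comm_ring_1"
  assumes add: "\<And>a b. \<phi> (a + b) = \<phi> a + \<phi> b" and u0: "u $ 0 = 0" and k: "k \<ge> 1"
  shows "frob_diag (fps_map_coeff \<phi>) k u $ 0 = 0"
proof -
  have "frob \<phi> (map (\<lambda>p. p $ 0) (replicate k u)) = frob (fps_map_coeff \<phi>) (replicate k u) $ 0"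
    using add[of 0 0] by (intro frob_map) (simp_all add: add)
  moreover have "map (\<lambda>p. p $ 0) (replicate k u) = (replicate k 0)[0 := 0 + 0]"
    using u0 by (cases k) simp_all
  moreover have "frob \<phi> ((replicate k 0)[0 := 0 + 0]) = frob \<phi> ((replicate k 0)[0 := 0]) + frob \<phi> ((replicate k 0)[0 := 0])"
    by (rule frob_update_add[OF add]) (use k in simp)
  ultimately show ?thesis using k by (simp add: frob_diag_def)
qed


section \<open>The Berezinian formula for the composite\<close>

lemma frob_diag_deriv:
  assumes Dm: "\<And>a b. D (a * b) = D a * b + a * D b"
    and D'm: "\<And>a b. D' (a * b) = D' a * b + a * D' b" and D'a: "\<And>a b. D' (a + b) = D' a + D' b"
    and \<phi>D: "\<And>x. \<phi> (D x) = D' (\<phi> x)"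
    and add: "\<And>a b. \<phi> (a + b) = \<phi> a + \<phi> b"
  shows "D' (frob_diag \<phi> (Suc k) u) = of_nat (Suc k) * frob \<phi> (D u # replicate k u)"
proof -
  have "D' (frob_diag \<phi> (Suc k) u) = (\<Sum>i<Suc k. frob \<phi> ((replicate (Suc k) u)[i := D u]))"
    using frob_deriv[OF Dm D'm D'a \<phi>D add, of "replicate (Suc k) u"]
    by (simp add: frob_diag_def del: replicate_Suc)
  also have "\<dots> = (\<Sum>i<Suc k. frob \<phi> (D u # replicate k u))"
  proof (intro sum.cong refl frob_mset)
    fix i assume "i \<in> {..<Suc k}"
    then have "mset ((replicate (Suc k) u)[i := D u]) = add_mset (D u) (mset (replicate (Suc k) u) - {#u#})"
      by (simp add: mset_update del: replicate_Suc)
    then show "mset ((replicate (Suc k) u)[i := D u]) = mset (D u # replicate k u)" by simp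
  qed
  finally show ?thesis by simp
qed

text \<open>Let phi have vanishing Phi_{n+1}, let M be its coefficientwise
  extension and let u' = v (1 + u).  Then S = sum_{k<=n} P_k^M(u)/k! satisfies S' = M(v) S:
  by the Leibniz rule and the recursion for P the derivative telescopes, and the only
  leftover term Phi^M_{n+1}(v,u,...,u) vanishes.\<close>
lemma truncated_exp_deriv:
  fixes \<phi> :: "'b::{real_algebra_1,comm_ring_1} \<Rightarrow> 'c::{real_algebra_1,comm_ring_1}"
    and u v :: "'b fps"
  assumes lin: "linear \<phi>" and van: "\<And>xs. length xs = Suc n \<Longrightarrow> frob \<phi> xs = 0"
    and du: "fps_deriv u = v + v * u"
  defines "S \<equiv> (\<Sum>k<Suc n. fps_const (of_real (1 / fact k)) * frob_diag (fps_map_coeff \<phi>) k u)"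
  shows "fps_deriv S = fps_map_coeff \<phi> v * S"
proof -
  let ?M = "fps_map_coeff \<phi>"
  define H where "H k x = frob ?M (x # replicate k u)" for k x
  define F where "F k = frob_diag ?M k u" for k
  define c :: "nat \<Rightarrow> 'c fps" where "c k = fps_const (of_real (1 / fact k))" for k
  interpret real_hom "\<lambda>r. fps_const (of_real r) :: 'c fps" by (rule real_hom_fps)
  have add\<phi>: "\<phi> (a + b) = \<phi> a + \<phi> b" for a b by (rule linear_add[OF lin])
  have addM: "?M (a + b) = ?M a + ?M b" for a b by (rule fps_map_coeff_add[OF add\<phi>])
  have cfact: "c (Suc k) * of_nat (Suc k) = c k" for k
    unfolding c_def by (rule e_fact)
  have recursion: "?M x * F k = H k x + of_nat k * H (k - 1) (x * u)" for k x
    unfolding H_def F_def by (metis frob_cons_replicate diff_add_cancel)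
  have H_add: "H k (a + b) = H k a + H k b" for k a b
    unfolding H_def using frob_update_add[OF addM, of 0 "x # replicate k u" a b for x] by simp
  have dF: "fps_deriv (F (Suc k)) = of_nat (Suc k) * H k (fps_deriv u)" for k
    unfolding F_def H_def
    by (rule frob_diag_deriv) (simp_all add: addM fps_map_coeff_deriv[OF lin] algebra_simps)
  have H_top: "H n v = 0"
    unfolding H_def using frob_fps_map_coeff_vanish[OF add\<phi> van, where xs="v # replicate n u"] by simp
  have dF0: "fps_deriv (F 0) = 0" by (simp add: F_def frob_diag_def)
  have "fps_deriv S = (\<Sum>k<Suc n. c k * fps_deriv (F k))"
    unfolding S_def c_def F_def by (simp only: fps_deriv_sum fps_deriv_mult_const_left)
  also have "\<dots> = (\<Sum>k<n. c (Suc k) * fps_deriv (F (Suc k)))"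
    by (simp only: sum.lessThan_Suc_shift dF0 mult_zero_right add_0)
  also have "\<dots> = (\<Sum>k<n. c k * (H k v + H k (v * u)))"
    by (intro sum.cong refl) (simp only: dF du H_add mult.assoc[symmetric] cfact)
  finally have lhs: "fps_deriv S = (\<Sum>k<n. c k * H k v) + (\<Sum>k<n. c k * H k (v * u))"
    by (simp add: sum.distrib distrib_left)
  have "?M v * S = (\<Sum>k<Suc n. c k * (?M v * F k))"
    unfolding S_def c_def F_def by (simp only: sum_distrib_left mult.left_commute)
  also have "\<dots> = (\<Sum>k<Suc n. c k * H k v) + (\<Sum>k<Suc n. c k * of_nat k * H (k - 1) (v * u))"
    by (simp only: recursion distrib_left mult.assoc sum.distrib)
  also have "(\<Sum>k<Suc n. c k * H k v) = (\<Sum>k<n. c k * H k v)"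
    by (simp add: H_top)
  also have "(\<Sum>k<Suc n. c k * of_nat k * H (k - 1) (v * u)) = (\<Sum>k<n. c (Suc k) * of_nat (Suc k) * H k (v * u))"
    by (simp only: sum.lessThan_Suc_shift of_nat_0 mult_zero_right mult_zero_left add_0 diff_Suc_1)
  also have "\<dots> = (\<Sum>k<n. c k * H k (v * u))" by (simp only: cfact)
  finally show ?thesis using lhs by simp
qed

lemma ber_ext_truncated_exp:
  fixes \<phi> :: "'b::{real_algebra_1,comm_ring_1} \<Rightarrow> 'c::{real_algebra_1,comm_ring_1}"
  assumes lin: "linear \<phi>"
  shows "ber_ext n \<phi> q = (\<Sum>k<Suc n. fps_const (of_real (1 / fact k)) * frob_diag (fps_map_coeff \<phi>) k (q - 1))"
proof -
  let ?M = "fps_map_coeff \<phi>"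
  have "char_fun_gen fps_scale fps_scale ?M (q - 1) =
      Abs_fps (\<lambda>k. fps_const (of_real (1 / fact k)) * frob_diag ?M k (q - 1))"
    by (rule real_hom.char_fun_gen_diag[OF real_hom_fps])
      (simp add: fps_scale_eq_const_mult, simp add: fps_map_coeff_add linear_add[OF lin],
        simp add: fps_map_coeff_scale[OF lin])
  then show ?thesis
    by (simp add: ber_ext_def sum.lessThan_Suc_shift frob_diag_def sum.atLeast1_atMost_eq del: sum.lessThan_Suc)
qed

lemma truncated_exp_nth0:
  fixes \<phi> :: "'b::{real_algebra_1,comm_ring_1} \<Rightarrow> 'c::{real_algebra_1,comm_ring_1}"
  assumes lin: "linear \<phi>" and u0: "u $ 0 = 0"
  shows "(\<Sum>k<Suc n. fps_const (of_real (1 / fact k)) * frob_diag (fps_map_coeff \<phi>) k u) $ 0 = 1"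
proof -
  have "frob_diag (fps_map_coeff \<phi>) (Suc k) u $ 0 = 0" for k
    by (rule frob_diag_fps_map_coeff_nth0[OF linear_add[OF lin] u0]) simp
  then show ?thesis
    by (simp add: fps_sum_nth sum.lessThan_Suc_shift frob_diag_def del: sum.lessThan_Suc)
qed

text \<open>The Berezinian formula R_{phi o gamma}(a,z) = ber_phi(R_gamma(a,z)).  With L = gamma(ln(1+az)),
  u = R_gamma - 1 satisfies u' = L' (1 + u); hence both sides solve F' = M(L') F, F(0) = 1.\<close>
lemma char_fun_comp:
  fixes \<gamma> :: "'a::{real_algebra_1,comm_ring_1} \<Rightarrow> 'b::{real_algebra_1,comm_ring_1}"
    and \<phi> :: "'b \<Rightarrow> 'c::{real_algebra_1,comm_ring_1}"
  assumes lg: "linear \<gamma>" and lp: "linear \<phi>" and van: "\<And>xs. length xs = Suc n \<Longrightarrow> frob \<phi> xs = 0"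
  shows "char_fun (\<phi> \<circ> \<gamma>) a = ber_ext n \<phi> (char_fun \<gamma> a)"
proof -
  let ?M = "fps_map_coeff \<phi>"
  define L where "L = Abs_fps (\<lambda>k. \<gamma> (fln1p scaleR a $ k))"
  define u where "u = char_fun \<gamma> a - 1"
  interpret rb: real_hom "of_real :: real \<Rightarrow> 'b" by (rule real_hom_of_real)
  interpret rc: real_hom "of_real :: real \<Rightarrow> 'c" by (rule real_hom_of_real)
  have L0: "L $ 0 = 0" by (simp add: L_def fln1p_def linear_0[OF lg])
  have R: "char_fun \<gamma> a = fexp scaleR L" by (simp add: char_fun_def char_fun_gen_def L_def)
  have dR: "fps_deriv (char_fun \<gamma> a) = fps_deriv L * char_fun \<gamma> a"
    unfolding R by (rule rb.fexp_deriv[OF scaleR_conv_of_real L0])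
  have u0: "u $ 0 = 0" unfolding u_def R by (simp add: rb.fexp_0[OF scaleR_conv_of_real])
  have du: "fps_deriv u = fps_deriv L + fps_deriv L * u" by (simp add: u_def dR algebra_simps)
  have LM: "Abs_fps (\<lambda>k. \<phi> (\<gamma> (fln1p scaleR a $ k))) = ?M L" by (intro fps_ext) (simp add: L_def)
  have "fexp scaleR (?M L) = ber_ext n \<phi> (char_fun \<gamma> a)"
  proof (rule rc.ode_unique)
    show "fps_deriv (fexp scaleR (?M L)) = fps_deriv (?M L) * fexp scaleR (?M L)"
      by (rule rc.fexp_deriv[OF scaleR_conv_of_real]) (simp add: L0 linear_0[OF lp])
    show "fps_deriv (ber_ext n \<phi> (char_fun \<gamma> a)) = fps_deriv (?M L) * ber_ext n \<phi> (char_fun \<gamma> a)"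
      using truncated_exp_deriv[OF lp van du]
      by (simp add: ber_ext_truncated_exp[OF lp] u_def fps_map_coeff_deriv[OF lp, symmetric])
    show "fexp scaleR (?M L) $ 0 = ber_ext n \<phi> (char_fun \<gamma> a) $ 0"
      using truncated_exp_nth0[OF lp u0]
      by (simp add: rc.fexp_0[OF scaleR_conv_of_real] ber_ext_truncated_exp[OF lp] u_def)
  qed
  then show ?thesis by (simp add: char_fun_def char_fun_gen_def LM)
qed


section \<open>Composition of Frobenius homomorphisms\<close>

lemma char_fun_degree:
  fixes \<gamma> :: "'a::{real_algebra_1,comm_ring_1} \<Rightarrow> 'b::{real_algebra_1,comm_ring_1}"
  assumes "frob_hom m \<gamma>" and "k > m"
  shows "(char_fun \<gamma> a - 1) $ k = 0"
proof -
  have "frob \<gamma> (replicate k a) = 0" using assms by (simp add: frob_hom_def)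
  then show ?thesis using assms by (simp add: char_fun_diag frob_hom_def frob_diag_def)
qed

text \<open>The diagonal value P_{nm+1}(a) of phi o gamma vanishes: by the Berezinian formula,
  R_{phi o gamma}(a,z) = sum_{k<=n} P^M_k(R_gamma - 1)/k! has degree at most nm, and its
  coefficient of z^(nm+1) is P_{nm+1}(a)/(nm+1)!.\<close>
lemma frob_comp_diag_vanish:
  fixes \<gamma> :: "'a::{real_algebra_1,comm_ring_1} \<Rightarrow> 'b::{real_algebra_1,comm_ring_1}"
    and \<phi> :: "'b \<Rightarrow> 'c::{real_algebra_1,comm_ring_1}"
  assumes \<gamma>: "frob_hom m \<gamma>" and \<phi>: "frob_hom n \<phi>"
  shows "frob (\<phi> \<circ> \<gamma>) (replicate (n * m + 1) a) = 0"
proof -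
  let ?M = "fps_map_coeff \<phi>" and ?N = "n * m + 1"
  have lg: "linear \<gamma>" and lp: "linear \<phi>" and vp: "\<And>xs. length xs = Suc n \<Longrightarrow> frob \<phi> xs = 0"
    using \<gamma> \<phi> by (simp_all add: frob_hom_def)
  define u where "u = char_fun \<gamma> a - 1"
  have deg_u: "\<forall>i>m. u $ i = 0" using char_fun_degree[OF \<gamma>] by (simp add: u_def)
  have term_vanish: "(fps_const (of_real (1 / fact k)) * frob_diag ?M k u) $ ?N = 0" if "k < Suc n" for k
  proof -
    have "k * m < ?N" using that by (simp add: less_Suc_eq_le trans_le_add1 mult_le_mono1)
    then show ?thesis
      by (simp add: frob_diag_fps_map_coeff_degree[where \<phi>=\<phi>, OF linear_0[OF lp] deg_u])
  qed
  have "of_real (1 / fact ?N) * frob_diag (\<phi> \<circ> \<gamma>) ?N a = char_fun (\<phi> \<circ> \<gamma>) a $ ?N"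
    by (simp add: char_fun_diag linear_compose[OF lg lp])
  also have "\<dots> = (\<Sum>k<Suc n. fps_const (of_real (1 / fact k)) * frob_diag ?M k u) $ ?N"
    by (simp add: char_fun_comp[OF lg lp vp] ber_ext_truncated_exp[OF lp] u_def)
  also have "\<dots> = 0" unfolding fps_sum_nth using term_vanish by (intro sum.neutral) simp
  finally have "of_real (1 / fact ?N) * frob_diag (\<phi> \<circ> \<gamma>) ?N a = (0::'c)" .
  then have "frob_diag (\<phi> \<circ> \<gamma>) ?N a = 0"
    by (rule real_hom.e_reciprocal_cancel[OF real_hom_of_real, rotated]) (rule fact_nonzero)
  then show ?thesis by (simp add: frob_diag_def)
qed

theorem mainTheorem9:
  fixes \<gamma> :: "'a::{real_algebra_1,comm_ring_1} \<Rightarrow> 'b::{real_algebra_1,comm_ring_1}"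
    and \<phi> :: "'b \<Rightarrow> 'c::{real_algebra_1,comm_ring_1}"
    and n m :: nat
  assumes "n \<ge> 1" and "m \<ge> 1"
    and "frob_hom m \<gamma>" and "frob_hom n \<phi>"
  shows "frob_hom (n * m) (\<phi> \<circ> \<gamma>) \<and>
         (\<forall>a. char_fun (\<phi> \<circ> \<gamma>) a = ber_ext n \<phi> (char_fun \<gamma> a))"
proof -
  have lg: "linear \<gamma>" and g1: "\<gamma> 1 = of_nat m"
    using assms(3) by (auto simp: frob_hom_def)
  have lp: "linear \<phi>" and p1: "\<phi> 1 = of_nat n" and vp: "\<And>xs. length xs = Suc n \<Longrightarrow> frob \<phi> xs = 0"
    using assms(4) by (auto simp: frob_hom_def)
  have lin: "linear (\<phi> \<circ> \<gamma>)" using lg lp by (rule linear_compose)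
  have unit: "(\<phi> \<circ> \<gamma>) 1 = of_nat (n * m)"
    using linear_scale[OF lp, of "real m" 1] by (simp add: g1 p1 scaleR_conv_of_real mult.commute)
  have "frob (\<phi> \<circ> \<gamma>) xs = 0" if "length xs = n * m + 1" for xs
    using frob_polarize[OF lin frob_comp_diag_vanish[OF assms(3,4)] that] .
  then have "frob (\<phi> \<circ> \<gamma>) xs = 0" if "length xs \<ge> n * m + 1" for xs
    using frob_vanish_longer that by (metis le_add2)
  then show ?thesis using lin unit char_fun_comp[OF lg lp vp] by (simp add: frob_hom_def)
qed

end
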